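(* Let $\beta>0$. Suppose $\psi\in C^\infty(\mathbb{R})$ is supported on $[0,1]$ with $\|\psi\|_2=1$ and $\int\psi=0$, and let $m$ be a positive integer. For $1\le j\le m$ let $\psi_j(x)=m^{1/2}\psi(mx-j+1)$. For $\rho>0$ and $\kappa\in\{-1,1\}^m$ define $V_\kappa(x)=1+\rho\sum_{j=1}^m\kappa_j\psi_j(x)$ for $x\in[0,1]$. If $\rho m^{1/2+q}\|\psi^{(q)}\|_\infty\le1$ for all $q\in\{0,1,\dots,\lfloor\beta\rfloor\}$ and $\rho m^{1/2+\beta}\big(4\|\psi^{(\lfloor\beta\rfloor)}\|_\infty\vee2\|\psi^{(\lfloor\beta\rfloor+1)}\|_\infty\big)\le1$, then $V_\kappa\in\mathcal{V}_{1,\beta}(m^{1/2}\rho)$.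
   Context: $\mathcal{H}_\beta=\mathcal{H}_\beta(M)$: functions $g:[0,1]\to\mathbb{R}$ with $|g^{(\lfloor\beta\rfloor)}(x)-g^{(\lfloor\beta\rfloor)}(y)|\le M|x-y|^{\beta-\lfloor\beta\rfloor}$ for all $x,y\in[0,1]$ and $\|g^{(k)}\|_\infty\le M$ for $k=0,\dots,\lfloor\beta\rfloor$; $M$ is a fixed sufficiently large constant (in particular $M\ge1$). $\mathcal{V}_{1,\beta}(\varepsilon)=\{V\in\mathcal{H}_\beta:V\ge0,\ \|V-\bar V\mathbf 1\|_2\ge\varepsilon\}$ with $\bar V=\int_0^1V(x)dx$, $\mathbf1\equiv1$ on $[0,1]$, and $\|\cdot\|_2$ the $L^2([0,1])$ norm. *)

theory Defs
  imports "HOL-Analysis.Analysis"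
begin

definition kderiv :: "nat \<Rightarrow> (real \<Rightarrow> real) \<Rightarrow> real \<Rightarrow> real" where
  "kderiv k g = (deriv ^^ k) g"

definition smooth_real :: "(real \<Rightarrow> real) \<Rightarrow> bool" where
  "smooth_real g \<longleftrightarrow> (\<forall>k x. kderiv k g differentiable (at x))"

definition supnorm :: "(real \<Rightarrow> real) \<Rightarrow> real" where
  "supnorm g = (SUP x. \<bar>g x\<bar>)"

definition holder_class :: "real \<Rightarrow> real \<Rightarrow> (real \<Rightarrow> real) \<Rightarrow> bool" where
  "holder_class M \<beta> g \<longleftrightarrow>
     (\<forall>k < nat \<lfloor>\<beta>\<rfloor>. \<forall>x \<in> {0..1}.
        (kderiv k g has_real_derivative kderiv (Suc k) g x) (at x within {0..1})) \<and>
     (\<forall>k \<le> nat \<lfloor>\<beta>\<rfloor>. \<forall>x \<in> {0..1}. \<bar>kderiv k g x\<bar> \<le> M) \<and>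
     (\<forall>x \<in> {0..1}. \<forall>y \<in> {0..1}.
        \<bar>kderiv (nat \<lfloor>\<beta>\<rfloor>) g x - kderiv (nat \<lfloor>\<beta>\<rfloor>) g y\<bar>
          \<le> M * \<bar>x - y\<bar> powr (\<beta> - of_int \<lfloor>\<beta>\<rfloor>))"

definition mean01 :: "(real \<Rightarrow> real) \<Rightarrow> real" where
  "mean01 V = integral {0..1} V"

definition L2norm01 :: "(real \<Rightarrow> real) \<Rightarrow> real" where
  "L2norm01 f = sqrt (integral {0..1} (\<lambda>x. (f x)\<^sup>2))"

definition V_class :: "real \<Rightarrow> real \<Rightarrow> real \<Rightarrow> (real \<Rightarrow> real) \<Rightarrow> bool" where
  "V_class M \<beta> \<epsilon> V \<longleftrightarrow> holder_class M \<beta> V \<and> (\<forall>x \<in> {0..1}. V x \<ge> 0) \<and>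
     L2norm01 (\<lambda>x. V x - mean01 V) \<ge> \<epsilon>"

definition psi_j :: "(real \<Rightarrow> real) \<Rightarrow> nat \<Rightarrow> nat \<Rightarrow> real \<Rightarrow> real" where
  "psi_j \<psi> m j x = sqrt (real m) * \<psi> (real m * x - real j + 1)"

definition V_kappa :: "(real \<Rightarrow> real) \<Rightarrow> nat \<Rightarrow> real \<Rightarrow> (nat \<Rightarrow> real) \<Rightarrow> real \<Rightarrow> real" where
  "V_kappa \<psi> m \<rho> \<kappa> x = 1 + \<rho> * (\<Sum>j=1..m. \<kappa> j * psi_j \<psi> m j x)"

end

theory Submission
  imports Defs
begin

(* V_kappa - 1 is rho times a sum of rescaled translates psi_j of psi whose supports
   ((j-1)/m, j/m) are pairwise disjoint, so at each point at most one summand is nonzero.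
   Hence the k-th derivative of V_kappa - 1 is bounded by rho m^(1/2+k) sup|psi^(k)|,
   which gives the derivative bounds and nonnegativity, and the squares of the summands
   integrate to rho^2 m, while int psi = 0 makes the mean equal to 1.  The Hoelder bound
   on the floor(beta)-th derivative interpolates between its sup bound, used when
   |x - y| >= 1/m, and the mean value bound from the next derivative, used when
   |x - y| < 1/m. *)

lemma kderiv_0 [simp]: "kderiv 0 g = g"
  by (simp add: kderiv_def)

lemma kderiv_Suc: "kderiv (Suc k) g = deriv (kderiv k g)"
  by (simp add: kderiv_def)

lemma smooth_real_has_derivative_kderiv:
  assumes "smooth_real g"
  shows "(kderiv k g has_real_derivative kderiv (Suc k) g x) (at x)"
  using assms unfolding smooth_real_def kderiv_Suc
  by (simp add: DERIV_deriv_iff_real_differentiable)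

lemma smooth_real_continuous_on_kderiv:
  assumes "smooth_real g"
  shows "continuous_on S (kderiv k g)"
  using assms unfolding smooth_real_def
  by (meson continuous_at_imp_continuous_on differentiable_imp_continuous_within)

lemma continuous_vanishing_outside_interval:
  fixes f :: "real \<Rightarrow> real"
  assumes cont: "continuous_on UNIV f" and zero: "\<And>x. x \<notin> {a..b} \<Longrightarrow> f x = 0"
    and x: "x \<notin> {a<..<b}"
  shows "f x = 0"
proof -
  have closed: "closed {x. f x = 0}"
    using closed_Collect_eq[OF cont continuous_on_const] by simp
  have "{..<a} \<subseteq> {x. f x = 0}" "{b<..} \<subseteq> {x. f x = 0}"
    using zero by auto
  then have "closure {..<a} \<subseteq> {x. f x = 0}" "closure {b<..} \<subseteq> {x. f x = 0}"
    using closed closure_minimal by blast+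
  with x zero show ?thesis
    by (cases "x \<in> {a..b}") auto
qed

lemma kderiv_vanishing_outside_interval:
  assumes smooth: "smooth_real g" and zero: "\<And>x. x \<notin> {a..b} \<Longrightarrow> g x = 0"
    and x: "x \<notin> {a<..<b}"
  shows "kderiv k g x = 0"
  using x
proof (induction k arbitrary: x)
  case 0
  have "continuous_on UNIV g"
    using smooth_real_continuous_on_kderiv[OF smooth, of UNIV 0] by simp
  from continuous_vanishing_outside_interval[OF this zero "0"] show ?case
    by simp
next
  case (Suc k)
  have "kderiv (Suc k) g y = 0" if y: "y \<notin> {a..b}" for y
  proof -
    have "(kderiv k g has_real_derivative 0) (at y)"
    proof (rule has_field_derivative_transform_within_open)
      show "((\<lambda>_. 0) has_real_derivative 0) (at y)" by simp
      show "open (- {a..b} :: real set)" by auto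
      show "0 = kderiv k g z" if "z \<in> - {a..b}" for z
        using Suc.IH that by auto
    qed (use y in auto)
    then show ?thesis
      by (simp add: kderiv_Suc DERIV_imp_deriv)
  qed
  then show ?case
    using continuous_vanishing_outside_interval[OF smooth_real_continuous_on_kderiv[OF smooth]] Suc.prems
    by blast
qed

lemma abs_kderiv_le_supnorm:
  assumes smooth: "smooth_real g" and zero: "\<And>x. x \<notin> {a..b} \<Longrightarrow> g x = 0"
  shows "\<bar>kderiv k g x\<bar> \<le> supnorm (kderiv k g)"
proof -
  have "compact (kderiv k g ` {a..b})"
    by (intro compact_continuous_image smooth_real_continuous_on_kderiv[OF smooth]) auto
  then obtain C where C: "\<forall>y \<in> {a..b}. \<bar>kderiv k g y\<bar> \<le> C"
    by (auto dest!: compact_imp_bounded simp: bounded_real)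
  have "\<bar>kderiv k g y\<bar> \<le> max C 0" for y
    using C kderiv_vanishing_outside_interval[OF smooth zero, where x = y and k = k]
    by (cases "y \<in> {a..b}") (auto intro: max.coboundedI1)
  then have "bdd_above (range (\<lambda>y. \<bar>kderiv k g y\<bar>))"
    by (auto intro!: bdd_aboveI)
  then show ?thesis
    unfolding supnorm_def by (rule cSUP_upper[OF UNIV_I])
qed

lemma sum_at_most_one_nonzero:
  fixes a :: "'a \<Rightarrow> 'b::comm_monoid_add"
  assumes "finite A" "A \<noteq> {}"
    and single: "\<And>j k. \<lbrakk>j \<in> A; k \<in> A; a j \<noteq> 0; a k \<noteq> 0\<rbrakk> \<Longrightarrow> j = k"
  obtains j where "j \<in> A" "\<And>f :: 'b \<Rightarrow> 'c::comm_monoid_add. f 0 = 0 \<Longrightarrow> (\<Sum>k\<in>A. f (a k)) = f (a j)"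
proof (cases "\<exists>j\<in>A. a j \<noteq> 0")
  case True
  then obtain j where j: "j \<in> A" "a j \<noteq> 0" by blast
  have "(\<Sum>k\<in>A. f (a k)) = f (a j)" if "f 0 = 0" for f :: "'b \<Rightarrow> 'c"
  proof -
    have "(\<Sum>k\<in>A - {j}. f (a k)) = 0"
      using single[OF j(1) _ j(2)] that by (intro sum.neutral) (metis DiffE singletonI)
    then show ?thesis
      using sum.remove[OF \<open>finite A\<close> j(1), of "\<lambda>k. f (a k)"] by simp
  qed
  with j(1) show ?thesis by (rule that)
next
  case False
  with \<open>A \<noteq> {}\<close> obtain j where "j \<in> A" "a j = 0" by blast
  with False show ?thesis by (intro that[of j]) simp_all
qed

lemma holder_of_bounded_and_lipschitz:
  fixes f f' :: "real \<Rightarrow> real"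
  assumes deriv: "\<And>z. (f has_real_derivative f' z) (at z)"
    and bound: "\<And>z. \<bar>f z\<bar> \<le> A" and deriv_bound: "\<And>z. \<bar>f' z\<bar> \<le> B"
    and \<alpha>: "0 \<le> \<alpha>" "\<alpha> \<le> 1" and h: "0 < h"
    and A: "2 * A \<le> C * h powr \<alpha>" and B: "B * h \<le> C * h powr \<alpha>"
  shows "\<bar>f x - f y\<bar> \<le> C * \<bar>x - y\<bar> powr \<alpha>"
proof -
  define d where "d = \<bar>x - y\<bar>"
  have "0 \<le> C * h powr \<alpha>"
    using A bound[of 0] by linarith
  then have C: "0 \<le> C"
    using h by (simp add: zero_le_mult_iff)
  consider "d = 0" | "h \<le> d" | "0 < d" "d < h"
    unfolding d_def by linarith
  then show ?thesis
  proof cases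
    case 1
    then show ?thesis unfolding d_def by simp
  next
    case 2
    have "\<bar>f x - f y\<bar> \<le> 2 * A"
      using bound[of x] bound[of y] by linarith
    also have "\<dots> \<le> C * h powr \<alpha>"
      by (fact A)
    also have "\<dots> \<le> C * d powr \<alpha>"
      using C h 2 \<alpha> by (intro mult_left_mono powr_mono2) auto
    finally show ?thesis unfolding d_def .
  next
    case 3
    have "\<bar>f x - f y\<bar> \<le> B * d"
      using field_differentiable_bound[of UNIV f f' B x y] deriv deriv_bound
      unfolding d_def by auto
    also have "B * d = B * h * (d / h) powr (1 - \<alpha>) * (d powr \<alpha> / h powr \<alpha>)"
      using 3 h by (simp add: powr_diff powr_divide field_simps)
    also have "\<dots> \<le> B * h * 1 * (d powr \<alpha> / h powr \<alpha>)"
      using 3 h \<alpha> deriv_bound[of 0]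
      by (intro mult_right_mono mult_left_mono powr_le1) auto
    also have "\<dots> \<le> C * d powr \<alpha>"
      using mult_right_mono[OF B, of "d powr \<alpha>"] h by (simp add: divide_le_eq mult_ac)
    finally show ?thesis unfolding d_def .
  qed
qed

lemma psi_j_disjoint_supports:
  assumes support: "\<And>y. y \<notin> {0<..<1} \<Longrightarrow> g y = 0"
    and nonzero: "psi_j g m j x \<noteq> 0" "psi_j g m k x \<noteq> 0"
  shows "j = k"
proof -
  have "real j - 1 < real m * x" "real m * x < real j"
    "real k - 1 < real m * x" "real m * x < real k"
    using support[of "real m * x - real j + 1"] support[of "real m * x - real k + 1"] nonzero
    unfolding psi_j_def by force+
  then have "j < k + 1" "k < j + 1"
    by linarith+
  then show ?thesis
    by simp
qed

lemma psi_j_has_real_derivative: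
  assumes "\<And>y. (g has_real_derivative g' y) (at y)"
  shows "(psi_j g m j has_real_derivative real m * psi_j g' m j x) (at x)"
proof -
  have "((\<lambda>x. g (real m * x - real j + 1)) has_real_derivative
      g' (real m * x - real j + 1) * real m) (at x)"
    by (rule DERIV_chain2[OF assms]) (auto intro!: derivative_eq_intros)
  then show ?thesis
    unfolding psi_j_def[abs_def] by (auto intro!: derivative_eq_intros)
qed

lemma abs_sum_psi_j_le:
  assumes support: "\<And>y. y \<notin> {0<..<1} \<Longrightarrow> g y = 0" and bound: "\<And>y. \<bar>g y\<bar> \<le> S"
    and signs: "\<forall>j \<in> {1..m}. \<kappa> j \<in> {-1, 1}" and m: "0 < m"
  shows "\<bar>\<Sum>j=1..m. \<kappa> j * psi_j g m j x\<bar> \<le> sqrt (real m) * S"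
proof -
  obtain j where j: "j \<in> {1..m}"
    and sum: "\<And>f :: real \<Rightarrow> real. f 0 = 0 \<Longrightarrow> (\<Sum>k=1..m. f (\<kappa> k * psi_j g m k x)) = f (\<kappa> j * psi_j g m j x)"
    by (rule sum_at_most_one_nonzero[of "{1..m}" "\<lambda>k. \<kappa> k * psi_j g m k x"])
      (use m psi_j_disjoint_supports[OF support] in auto)
  have "\<kappa> j \<in> {-1, 1}"
    using signs j by blast
  then have "\<bar>\<kappa> j\<bar> = 1"
    by auto
  then have "\<bar>\<kappa> j * psi_j g m j x\<bar> \<le> sqrt (real m) * S"
    using bound by (simp add: psi_j_def abs_mult mult_left_mono)
  then show ?thesis
    using sum[of "\<lambda>t. t"] by simp
qed

lemma power2_sum_psi_j:
  assumes support: "\<And>y. y \<notin> {0<..<1} \<Longrightarrow> g y = 0"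
    and signs: "\<forall>j \<in> {1..m}. \<kappa> j \<in> {-1, 1}" and m: "0 < m"
  shows "(\<Sum>j=1..m. \<kappa> j * psi_j g m j x)\<^sup>2 = (\<Sum>j=1..m. (psi_j g m j x)\<^sup>2)"
proof -
  obtain j where j: "j \<in> {1..m}"
    and sum: "\<And>f :: real \<Rightarrow> real. f 0 = 0 \<Longrightarrow> (\<Sum>k=1..m. f (\<kappa> k * psi_j g m k x)) = f (\<kappa> j * psi_j g m j x)"
    by (rule sum_at_most_one_nonzero[of "{1..m}" "\<lambda>k. \<kappa> k * psi_j g m k x"])
      (use m psi_j_disjoint_supports[OF support] in auto)
  have "(\<kappa> k * psi_j g m k x)\<^sup>2 = (psi_j g m k x)\<^sup>2" if "k \<in> {1..m}" for k
  proof -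
    have "\<kappa> k \<in> {-1, 1}"
      using signs that by blast
    then show ?thesis
      by (auto simp: power_mult_distrib)
  qed
  then show ?thesis
    using sum[of "\<lambda>t. t"] sum[of "\<lambda>t. t\<^sup>2"] j by simp
qed

lemma has_integral_rescaled_translate:
  fixes f :: "real \<Rightarrow> real"
  assumes f: "(f has_integral I) UNIV" and support: "\<forall>x. x \<notin> {0..1} \<longrightarrow> f x = 0"
    and j: "j \<in> {1..m}"
  shows "((\<lambda>x. f (real m * x - real j + 1)) has_integral I / real m) {0..1}"
proof -
  have m: "0 < real m"
    using j by simp
  have "(\<lambda>x. if x \<in> {0..1} then f x else 0) = f"
    using support by auto
  with f have "(f has_integral I) (cbox 0 1)"
    using has_integral_restrict_UNIV[of "{0..1}" f I] by simp
  from has_integral_affinity'[OF this m, of "1 - real j"]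
  have "((\<lambda>x. f (real m * x - real j + 1)) has_integral I / real m)
      {(real j - 1) / real m .. real j / real m}"
    by (simp add: divide_inverse algebra_simps)
  then show ?thesis
  proof (rule has_integral_on_superset)
    show "f (real m * x - real j + 1) = 0"
      if "x \<notin> {(real j - 1) / real m .. real j / real m}" for x
      using that support m by (auto simp: field_simps)
    show "{(real j - 1) / real m .. real j / real m} \<subseteq> {0..1}"
      using j m by (auto simp: field_simps)
  qed
qed

context
  fixes \<psi> :: "real \<Rightarrow> real"
  assumes smooth: "smooth_real \<psi>" and support: "\<forall>x. x \<notin> {0..1} \<longrightarrow> \<psi> x = 0"
begin

lemma kderiv_vanishing_outside_unit: "x \<notin> {0<..<1} \<Longrightarrow> kderiv k \<psi> x = 0"
  using kderiv_vanishing_outside_interval[OF smooth] support by blast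

lemma abs_kderiv_le: "\<bar>kderiv k \<psi> x\<bar> \<le> supnorm (kderiv k \<psi>)"
  using abs_kderiv_le_supnorm[OF smooth] support by blast

lemma has_real_derivative_sum_psi_j:
  "((\<lambda>x. \<Sum>j=1..m. \<kappa> j * psi_j (kderiv k \<psi>) m j x) has_real_derivative
     real m * (\<Sum>j=1..m. \<kappa> j * psi_j (kderiv (Suc k) \<psi>) m j x)) (at x)"
proof -
  have "((\<lambda>x. \<Sum>j=1..m. \<kappa> j * psi_j (kderiv k \<psi>) m j x) has_real_derivative
      (\<Sum>j=1..m. \<kappa> j * (real m * psi_j (kderiv (Suc k) \<psi>) m j x))) (at x)"
    by (intro DERIV_sum DERIV_cmult psi_j_has_real_derivative smooth_real_has_derivative_kderiv[OF smooth])
  then show ?thesis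
    by (simp add: sum_distrib_left mult_ac)
qed

lemma kderiv_V_kappa:
  "kderiv k (V_kappa \<psi> m \<rho> \<kappa>) =
     (\<lambda>x. of_bool (k = 0) + \<rho> * real m ^ k * (\<Sum>j=1..m. \<kappa> j * psi_j (kderiv k \<psi>) m j x))"
proof (induction k)
  case 0
  show ?case
    by (simp add: V_kappa_def fun_eq_iff)
next
  case (Suc k)
  have "((\<lambda>x. of_bool (k = 0) + \<rho> * real m ^ k * (\<Sum>j=1..m. \<kappa> j * psi_j (kderiv k \<psi>) m j x))
      has_real_derivative \<rho> * real m ^ Suc k * (\<Sum>j=1..m. \<kappa> j * psi_j (kderiv (Suc k) \<psi>) m j x)) (at x)"
    for x
    by (rule DERIV_cong[OF DERIV_add[OF DERIV_const DERIV_cmult[OF has_real_derivative_sum_psi_j]]]) simp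
  then show ?case
    by (simp add: kderiv_Suc Suc.IH fun_eq_iff DERIV_imp_deriv)
qed

lemma smooth_real_V_kappa: "smooth_real (V_kappa \<psi> m \<rho> \<kappa>)"
  unfolding smooth_real_def kderiv_V_kappa real_differentiable_def
  using DERIV_add[OF DERIV_const DERIV_cmult[OF has_real_derivative_sum_psi_j]] by blast

lemma abs_kderiv_V_kappa_le:
  assumes m: "0 < m" and \<rho>: "0 \<le> \<rho>" and signs: "\<forall>j \<in> {1..m}. \<kappa> j \<in> {-1, 1}"
  shows "\<bar>kderiv k (V_kappa \<psi> m \<rho> \<kappa>) x - of_bool (k = 0)\<bar>
    \<le> \<rho> * real m powr (1/2 + real k) * supnorm (kderiv k \<psi>)"
proof -
  have "\<bar>\<Sum>j=1..m. \<kappa> j * psi_j (kderiv k \<psi>) m j x\<bar> \<le> sqrt (real m) * supnorm (kderiv k \<psi>)"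
    by (rule abs_sum_psi_j_le[OF kderiv_vanishing_outside_unit abs_kderiv_le signs m])
  then have "\<rho> * real m ^ k * \<bar>\<Sum>j=1..m. \<kappa> j * psi_j (kderiv k \<psi>) m j x\<bar>
      \<le> \<rho> * real m ^ k * (sqrt (real m) * supnorm (kderiv k \<psi>))"
    using \<rho> by (intro mult_left_mono) auto
  moreover have "real m powr (1/2 + real k) = sqrt (real m) * real m ^ k"
    using m by (simp add: powr_add powr_realpow powr_half_sqrt)
  ultimately show ?thesis
    using \<rho> by (simp add: kderiv_V_kappa abs_mult mult_ac)
qed

lemma V_kappa_nonneg:
  assumes m: "0 < m" and \<rho>: "0 \<le> \<rho>" and signs: "\<forall>j \<in> {1..m}. \<kappa> j \<in> {-1, 1}"
    and small: "\<rho> * real m powr (1/2) * supnorm \<psi> \<le> 1"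
  shows "0 \<le> V_kappa \<psi> m \<rho> \<kappa> x"
  using abs_kderiv_V_kappa_le[OF m \<rho> signs, of 0 x] small by simp

lemma kderiv_V_kappa_holder:
  assumes m: "0 < m" and \<rho>: "0 \<le> \<rho>" and signs: "\<forall>j \<in> {1..m}. \<kappa> j \<in> {-1, 1}"
    and \<beta>: "0 \<le> \<beta>"
    and small: "\<rho> * real m powr (1/2 + \<beta>) *
      max (4 * supnorm (kderiv (nat \<lfloor>\<beta>\<rfloor>) \<psi>)) (2 * supnorm (kderiv (nat \<lfloor>\<beta>\<rfloor> + 1) \<psi>)) \<le> 1"
  shows "\<bar>kderiv (nat \<lfloor>\<beta>\<rfloor>) (V_kappa \<psi> m \<rho> \<kappa>) x - kderiv (nat \<lfloor>\<beta>\<rfloor>) (V_kappa \<psi> m \<rho> \<kappa>) y\<bar>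
    \<le> 1/2 * \<bar>x - y\<bar> powr (\<beta> - of_int \<lfloor>\<beta>\<rfloor>)"
proof -
  define s \<alpha> where "s = nat \<lfloor>\<beta>\<rfloor>" and "\<alpha> = \<beta> - of_int \<lfloor>\<beta>\<rfloor>"
  define P where "P = \<rho> * real m powr (1/2 + real s)"
  define S where "S k = supnorm (kderiv k \<psi>)" for k
  let ?V = "V_kappa \<psi> m \<rho> \<kappa>"
  have \<alpha>: "0 \<le> \<alpha>" "\<alpha> \<le> 1"
    unfolding \<alpha>_def by linarith+
  have "P \<ge> 0" "real m powr \<alpha> > 0"
    using \<rho> m unfolding P_def by simp_all
  have "real m powr (1/2 + \<beta>) = real m powr (1/2 + real s) * real m powr \<alpha>"
    using \<beta> unfolding s_def \<alpha>_def by (simp add: powr_add[symmetric])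
  then have "P * real m powr \<alpha> * max (4 * S s) (2 * S (Suc s)) \<le> 1"
    using small unfolding P_def S_def s_def by (simp add: mult_ac)
  then have small_s: "P * real m powr \<alpha> * (4 * S s) \<le> 1"
    and small_Suc: "P * real m powr \<alpha> * (2 * S (Suc s)) \<le> 1"
    using \<open>P \<ge> 0\<close> \<open>real m powr \<alpha> > 0\<close>
    by (smt (verit) max.cobounded1 max.cobounded2 mult_left_mono zero_le_mult_iff)+
  have "real m powr (1/2 + real (Suc s)) = real m powr (1 + (1/2 + real s))"
    by (simp add: add_ac)
  also have "\<dots> = real m * real m powr (1/2 + real s)"
    using m by (subst powr_add) simp
  finally have powr_Suc: "real m powr (1/2 + real (Suc s)) = real m * real m powr (1/2 + real s)" .
  have "\<bar>(kderiv s ?V x - of_bool (s = 0)) - (kderiv s ?V y - of_bool (s = 0))\<bar>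
      \<le> 1/2 * \<bar>x - y\<bar> powr \<alpha>"
  \<comment> \<open>The constant 1 of V_kappa shows up only for s = 0; subtracting it makes the sup bound small.\<close>
  proof (rule holder_of_bounded_and_lipschitz[OF _ _ _ \<alpha>])
    show "((\<lambda>z. kderiv s ?V z - of_bool (s = 0)) has_real_derivative kderiv (Suc s) ?V z) (at z)" for z
      by (rule DERIV_cong[OF DERIV_diff[OF smooth_real_has_derivative_kderiv[OF smooth_real_V_kappa] DERIV_const]])
        simp
    show "\<bar>kderiv s ?V z - of_bool (s = 0)\<bar> \<le> P * S s" for z
      using abs_kderiv_V_kappa_le[OF m \<rho> signs] unfolding P_def S_def by simp
    show "\<bar>kderiv (Suc s) ?V z\<bar> \<le> real m * P * S (Suc s)" for z
      using abs_kderiv_V_kappa_le[OF m \<rho> signs, of "Suc s" z] unfolding P_def S_def powr_Suc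
      by (simp add: mult_ac)
    show "0 < 1 / real m"
      using m by simp
    show "2 * (P * S s) \<le> 1/2 * (1 / real m) powr \<alpha>"
      using small_s \<open>real m powr \<alpha> > 0\<close> m by (simp add: powr_divide field_simps)
    show "real m * P * S (Suc s) * (1 / real m) \<le> 1/2 * (1 / real m) powr \<alpha>"
      using small_Suc \<open>real m powr \<alpha> > 0\<close> m by (simp add: powr_divide field_simps)
  qed
  then show ?thesis
    unfolding s_def \<alpha>_def by simp
qed

lemma holder_class_V_kappa:
  assumes M: "2 \<le> M" and m: "0 < m" and \<rho>: "0 \<le> \<rho>" and signs: "\<forall>j \<in> {1..m}. \<kappa> j \<in> {-1, 1}"
    and \<beta>: "0 \<le> \<beta>"
    and small_low: "\<forall>q \<le> nat \<lfloor>\<beta>\<rfloor>. \<rho> * real m powr (1/2 + real q) * supnorm (kderiv q \<psi>) \<le> 1"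
    and small_top: "\<rho> * real m powr (1/2 + \<beta>) *
      max (4 * supnorm (kderiv (nat \<lfloor>\<beta>\<rfloor>) \<psi>)) (2 * supnorm (kderiv (nat \<lfloor>\<beta>\<rfloor> + 1) \<psi>)) \<le> 1"
  shows "holder_class M \<beta> (V_kappa \<psi> m \<rho> \<kappa>)"
  unfolding holder_class_def
proof (intro conjI ballI allI impI)
  fix k x
  show "(kderiv k (V_kappa \<psi> m \<rho> \<kappa>) has_real_derivative kderiv (Suc k) (V_kappa \<psi> m \<rho> \<kappa>) x)
      (at x within {0..1})"
    by (rule has_field_derivative_at_within[OF smooth_real_has_derivative_kderiv[OF smooth_real_V_kappa]])
next
  fix k x
  assume "k \<le> nat \<lfloor>\<beta>\<rfloor>"
  with small_low have "\<rho> * real m powr (1/2 + real k) * supnorm (kderiv k \<psi>) \<le> 1"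
    by blast
  then have "\<bar>kderiv k (V_kappa \<psi> m \<rho> \<kappa>) x - of_bool (k = 0)\<bar> \<le> 1"
    using abs_kderiv_V_kappa_le[OF m \<rho> signs, of k x] by linarith
  then show "\<bar>kderiv k (V_kappa \<psi> m \<rho> \<kappa>) x\<bar> \<le> M"
    using M by (cases "k = 0") auto
next
  fix x y :: real
  have "1/2 * \<bar>x - y\<bar> powr (\<beta> - of_int \<lfloor>\<beta>\<rfloor>) \<le> M * \<bar>x - y\<bar> powr (\<beta> - of_int \<lfloor>\<beta>\<rfloor>)"
    using M by (intro mult_right_mono) auto
  with kderiv_V_kappa_holder[OF m \<rho> signs \<beta> small_top]
  show "\<bar>kderiv (nat \<lfloor>\<beta>\<rfloor>) (V_kappa \<psi> m \<rho> \<kappa>) x - kderiv (nat \<lfloor>\<beta>\<rfloor>) (V_kappa \<psi> m \<rho> \<kappa>) y\<bar>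
      \<le> M * \<bar>x - y\<bar> powr (\<beta> - of_int \<lfloor>\<beta>\<rfloor>)"
    by (rule order.trans)
qed

lemma mean01_V_kappa:
  assumes mean_zero: "(\<psi> has_integral 0) UNIV" and m: "0 < m"
  shows "mean01 (V_kappa \<psi> m \<rho> \<kappa>) = 1"
proof -
  have "(psi_j \<psi> m j has_integral 0) {0..1}" if "j \<in> {1..m}" for j
    using has_integral_mult_right[OF has_integral_rescaled_translate[OF mean_zero support that],
        of "sqrt (real m)"]
    unfolding psi_j_def[abs_def] by simp
  then have "((\<lambda>x. \<Sum>j=1..m. \<kappa> j * psi_j \<psi> m j x) has_integral (\<Sum>j=1..m. \<kappa> j * 0)) {0..1}"
    by (intro has_integral_sum has_integral_mult_right) auto
  from has_integral_add[OF has_integral_const_real[of 1 0 1] has_integral_mult_right[OF this, of \<rho>]]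
  show ?thesis
    unfolding mean01_def V_kappa_def[abs_def] by (simp add: integral_unique)
qed

lemma L2norm01_V_kappa:
  assumes unit: "((\<lambda>x. (\<psi> x)\<^sup>2) has_integral 1) UNIV" and mean_zero: "(\<psi> has_integral 0) UNIV"
    and m: "0 < m" and \<rho>: "0 \<le> \<rho>" and signs: "\<forall>j \<in> {1..m}. \<kappa> j \<in> {-1, 1}"
  shows "L2norm01 (\<lambda>x. V_kappa \<psi> m \<rho> \<kappa> x - mean01 (V_kappa \<psi> m \<rho> \<kappa>)) = sqrt (real m) * \<rho>"
proof -
  have square: "(\<lambda>x. (V_kappa \<psi> m \<rho> \<kappa> x - mean01 (V_kappa \<psi> m \<rho> \<kappa>))\<^sup>2)
      = (\<lambda>x. \<rho>\<^sup>2 * (\<Sum>j=1..m. (psi_j \<psi> m j x)\<^sup>2))"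
    using power2_sum_psi_j[OF kderiv_vanishing_outside_unit[where k = 0, simplified] signs m]
    by (simp add: mean01_V_kappa[OF mean_zero m] V_kappa_def power_mult_distrib)
  have "((\<lambda>x. (psi_j \<psi> m j x)\<^sup>2) has_integral 1) {0..1}" if "j \<in> {1..m}" for j
    using has_integral_mult_right[OF has_integral_rescaled_translate[OF unit _ that], of "real m"] support m
    unfolding psi_j_def by (simp add: power_mult_distrib)
  then have integral: "((\<lambda>x. \<rho>\<^sup>2 * (\<Sum>j=1..m. (psi_j \<psi> m j x)\<^sup>2)) has_integral \<rho>\<^sup>2 * real m) {0..1}"
    using has_integral_mult_right[OF has_integral_sum[of "{1..m}" "\<lambda>j x. (psi_j \<psi> m j x)\<^sup>2" "\<lambda>_. 1"]]
    by simp
  show ?thesis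
    using \<rho> unfolding L2norm01_def square integral_unique[OF integral] by (simp add: real_sqrt_mult)
qed

end

theorem proposition7p2:
  "\<exists>M0::real. M0 \<ge> 1 \<and>
    (\<forall>M \<ge> M0. \<forall>(\<beta>::real) (\<psi>::real \<Rightarrow> real) (m::nat) (\<rho>::real) (\<kappa>::nat \<Rightarrow> real).
      \<beta> > 0 \<longrightarrow>
      smooth_real \<psi> \<longrightarrow>
      (\<forall>x. x \<notin> {0..1} \<longrightarrow> \<psi> x = 0) \<longrightarrow>
      ((\<lambda>x. (\<psi> x)\<^sup>2) has_integral 1) UNIV \<longrightarrow>
      (\<psi> has_integral 0) UNIV \<longrightarrow>
      m > 0 \<longrightarrow>
      \<rho> > 0 \<longrightarrow>
      (\<forall>j \<in> {1..m}. \<kappa> j \<in> {-1, 1}) \<longrightarrow>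
      (\<forall>q \<le> nat \<lfloor>\<beta>\<rfloor>. \<rho> * real m powr (1/2 + real q) * supnorm (kderiv q \<psi>) \<le> 1) \<longrightarrow>
      \<rho> * real m powr (1/2 + \<beta>) *
        max (4 * supnorm (kderiv (nat \<lfloor>\<beta>\<rfloor>) \<psi>)) (2 * supnorm (kderiv (nat \<lfloor>\<beta>\<rfloor> + 1) \<psi>)) \<le> 1
      \<longrightarrow> V_class M \<beta> (sqrt (real m) * \<rho>) (V_kappa \<psi> m \<rho> \<kappa>))"
proof (intro exI[of _ 2] conjI allI impI)
  fix M \<beta> \<rho> :: real and \<psi> :: "real \<Rightarrow> real" and m :: nat and \<kappa> :: "nat \<Rightarrow> real"
  assume M: "M \<ge> 2" and \<beta>: "\<beta> > 0" and smooth: "smooth_real \<psi>"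
    and support: "\<forall>x. x \<notin> {0..1} \<longrightarrow> \<psi> x = 0"
    and unit: "((\<lambda>x. (\<psi> x)\<^sup>2) has_integral 1) UNIV" and mean_zero: "(\<psi> has_integral 0) UNIV"
    and m: "m > 0" and \<rho>: "\<rho> > 0" and signs: "\<forall>j \<in> {1..m}. \<kappa> j \<in> {-1, 1}"
    and small_low: "\<forall>q \<le> nat \<lfloor>\<beta>\<rfloor>. \<rho> * real m powr (1/2 + real q) * supnorm (kderiv q \<psi>) \<le> 1"
    and small_top: "\<rho> * real m powr (1/2 + \<beta>) *
      max (4 * supnorm (kderiv (nat \<lfloor>\<beta>\<rfloor>) \<psi>)) (2 * supnorm (kderiv (nat \<lfloor>\<beta>\<rfloor> + 1) \<psi>)) \<le> 1"
  have "\<rho> * real m powr (1/2) * supnorm \<psi> \<le> 1"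
    using small_low by force
  then show "V_class M \<beta> (sqrt (real m) * \<rho>) (V_kappa \<psi> m \<rho> \<kappa>)"
    unfolding V_class_def
    using holder_class_V_kappa[OF smooth support M m _ signs _ small_low small_top]
      V_kappa_nonneg[OF smooth support m _ signs] L2norm01_V_kappa[OF smooth support unit mean_zero m _ signs]
      \<beta> \<rho> by simp
qed simp

end
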